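(* Let $p\in\mathbb R^I$ be a probability vector with positive entries and suppose $\vartheta_p>0$. Then there exist nonnegative integers $\{\widetilde N^n_{ij}:(i,j)\in\mathcal E,\ n\in\mathbb N\}$ and a constant $C_0>0$ such that, for all sufficiently large $n$: (i) $\lambda^n_i=\sum_{j\in\mathcal J(i)}\mu^n_{ij}\widetilde N^n_{ij}-\vartheta_p\,p_i\sqrt n+\epsilon^n_i$ for all $i\in\mathcal I$, where $\epsilon^n_i/\sqrt n\to0$ as $n\to\infty$; (ii) $|N^n_{ij}-\widetilde N^n_{ij}|\le C_0\sqrt n$ for all $(i,j)\in\mathcal E$; (iii) $\sum_{i\in\mathcal I(j)}\widetilde N^n_{ij}=N^n_j$ for all $j\in\mathcal J$.
   Context: Network and parameters: $\mathcal I=\{1,\dots,I\}$, $\mathcal J=\{1,\dots,J\}$, edges $\mathcal E\subset\mathcal I\times\mathcal J$ with the bipartite graph $\mathcal G=(\mathcal I\cup\mathcal J,\mathcal E)$ a tree; $i\sim j$ iff $(i,j)\in\mathcal E$, $\mathcal J(i)=\{j:i\sim j\}$, $\mathcal I(j)=\{i:i\sim j\}$; $\mathbb R^{\mathcal G}$ denotes arrays in $\mathbb R^{I\times J}$ vanishing off $\mathcal E$, $\mathbb R^{\mathcal G}_+$ those with nonnegative entries. For each $n\in\mathbb N$: arrival rates $\lambda^n_i>0$, service rates $\mu^n_{ij}>0$, pool sizes $N^n_j\in\mathbb N$, with $\lambda^n_i/n\to\lambda_i>0$, $N^n_j/n\to\nu_j>0$, $\mu^n_{ij}\to\mu_{ij}>0$,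 $(\lambda^n_i-n\lambda_i)/\sqrt n\to\hat\lambda_i$, $\sqrt n(\mu^n_{ij}-\mu_{ij})\to\hat\mu_{ij}$, $\sqrt n(N^n_j/n-\nu_j)\to\hat\nu_j$ (real limits). Complete resource pooling: the LP "minimize $\max_j\sum_i\xi_{ij}$ over $\xi\in\mathbb R^{\mathcal G}_+$ subject to $\sum_j\mu_{ij}\nu_j\xi_{ij}=\lambda_i$ $\forall i$" has a unique solution $\xi^*$, with $\sum_i\xi^*_{ij}=1$ $\forall j$ and $\xi^*_{ij}>0$ for $i\sim j$; $z^*_{ij}:=\xi^*_{ij}\nu_j$; $\theta_j:=\hat\nu_j+\sum_{i\in\mathcal I(j)}(\hat\mu_{ij}/\mu_{ij})z^*_{ij}$. SWSS: for a probability vector $p$ with positive entries, $\vartheta_p$ is the (unique) optimal value of: maximize $\vartheta$ over $(\vartheta,\kappa)\in\mathbb R\times\mathbb R^{\mathcal G}$ subject to $\hat\lambda_i\le\sum_{j\in\mathcal J(i)}\mu_{ij}\kappa_{ij}-\vartheta p_i$ $\forall i$ and $\sum_{i\in\mathcal I(j)}\kappa_{ij}=\theta_j$ $\forall j$. $N^n_{ij}$ ($(i,j)\in\mathcal E$) are nonnegative integers with $\lfloor\xi^*_{ij}N^n_j\rfloor\le N^n_{ij}\le\lceil\xi^*_{ij}N^n_j\rceil$ and $\sum_{i\in\mathcal I(j)}N^n_{ij}=N^n_j$. *)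

theory Defs
  imports "HOL-Analysis.Analysis"
begin

text \<open>Classes are \<open>{1..I}\<close>, pools are \<open>{1..J}\<close>; the edge set \<open>E\<close> is a set of
  pairs \<open>(i,j)\<close>. Arrays in \<open>R^G\<close> are functions \<open>nat \<Rightarrow> nat \<Rightarrow> real\<close> vanishing off \<open>E\<close>.\<close>

definition Jset :: "(nat \<times> nat) set \<Rightarrow> nat \<Rightarrow> nat set" where
  "Jset E i = {j. (i, j) \<in> E}"

definition Iset :: "(nat \<times> nat) set \<Rightarrow> nat \<Rightarrow> nat set" where
  "Iset E j = {i. (i, j) \<in> E}"

definition bip_adj :: "(nat \<times> nat) set \<Rightarrow> ((nat + nat) \<times> (nat + nat)) set" where
  "bip_adj E = {(Inl i, Inr j) | i j. (i, j) \<in> E} \<union> {(Inr j, Inl i) | i j. (i, j) \<in> E}"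

text \<open>A tree: connected, and acyclic (every edge is a bridge, i.e. removing it
  disconnects its endpoints).\<close>
definition bip_tree :: "nat \<Rightarrow> nat \<Rightarrow> (nat \<times> nat) set \<Rightarrow> bool" where
  "bip_tree I J E \<longleftrightarrow>
     E \<subseteq> {1..I} \<times> {1..J} \<and>
     (\<forall>u \<in> Inl ` {1..I} \<union> Inr ` {1..J}. \<forall>v \<in> Inl ` {1..I} \<union> Inr ` {1..J}.
        (u, v) \<in> (bip_adj E)\<^sup>*) \<and>
     (\<forall>(i, j) \<in> E. (Inl i, Inr j) \<notin> (bip_adj (E - {(i, j)}))\<^sup>*)"

definition in_RG :: "(nat \<times> nat) set \<Rightarrow> (nat \<Rightarrow> nat \<Rightarrow> real) \<Rightarrow> bool" where
  "in_RG E x \<longleftrightarrow> (\<forall>i j. (i, j) \<notin> E \<longrightarrow> x i j = 0)"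

definition in_RG_plus :: "(nat \<times> nat) set \<Rightarrow> (nat \<Rightarrow> nat \<Rightarrow> real) \<Rightarrow> bool" where
  "in_RG_plus E x \<longleftrightarrow> in_RG E x \<and> (\<forall>i j. 0 \<le> x i j)"

definition crp_feasible ::
  "nat \<Rightarrow> (nat \<times> nat) set \<Rightarrow> (nat \<Rightarrow> real) \<Rightarrow> (nat \<Rightarrow> nat \<Rightarrow> real) \<Rightarrow> (nat \<Rightarrow> real)
   \<Rightarrow> (nat \<Rightarrow> nat \<Rightarrow> real) \<Rightarrow> bool" where
  "crp_feasible I E lam mu nu \<xi> \<longleftrightarrow> in_RG_plus E \<xi> \<and>
     (\<forall>i \<in> {1..I}. (\<Sum>j \<in> Jset E i. mu i j * nu j * \<xi> i j) = lam i)"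

definition crp_obj :: "nat \<Rightarrow> (nat \<times> nat) set \<Rightarrow> (nat \<Rightarrow> nat \<Rightarrow> real) \<Rightarrow> real" where
  "crp_obj J E \<xi> = Max ((\<lambda>j. \<Sum>i \<in> Iset E j. \<xi> i j) ` {1..J})"

definition crp_unique_solution ::
  "nat \<Rightarrow> nat \<Rightarrow> (nat \<times> nat) set \<Rightarrow> (nat \<Rightarrow> real) \<Rightarrow> (nat \<Rightarrow> nat \<Rightarrow> real) \<Rightarrow> (nat \<Rightarrow> real)
   \<Rightarrow> (nat \<Rightarrow> nat \<Rightarrow> real) \<Rightarrow> bool" where
  "crp_unique_solution I J E lam mu nu \<xi>s \<longleftrightarrow>
     crp_feasible I E lam mu nu \<xi>s \<and>
     (\<forall>\<xi>. crp_feasible I E lam mu nu \<xi> \<longrightarrow> crp_obj J E \<xi>s \<le> crp_obj J E \<xi>) \<and>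
     (\<forall>\<xi>. crp_feasible I E lam mu nu \<xi> \<and> crp_obj J E \<xi> \<le> crp_obj J E \<xi>s \<longrightarrow> \<xi> = \<xi>s)"

definition swss_feasible ::
  "nat \<Rightarrow> nat \<Rightarrow> (nat \<times> nat) set \<Rightarrow> (nat \<Rightarrow> real) \<Rightarrow> (nat \<Rightarrow> nat \<Rightarrow> real) \<Rightarrow> (nat \<Rightarrow> real)
   \<Rightarrow> (nat \<Rightarrow> real) \<Rightarrow> real \<Rightarrow> (nat \<Rightarrow> nat \<Rightarrow> real) \<Rightarrow> bool" where
  "swss_feasible I J E lamhat mu theta p \<theta> \<kappa> \<longleftrightarrow> in_RG E \<kappa> \<and>
     (\<forall>i \<in> {1..I}. lamhat i \<le> (\<Sum>j \<in> Jset E i. mu i j * \<kappa> i j) - \<theta> * p i) \<and>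
     (\<forall>j \<in> {1..J}. (\<Sum>i \<in> Iset E j. \<kappa> i j) = theta j)"

definition swss_value ::
  "nat \<Rightarrow> nat \<Rightarrow> (nat \<times> nat) set \<Rightarrow> (nat \<Rightarrow> real) \<Rightarrow> (nat \<Rightarrow> nat \<Rightarrow> real) \<Rightarrow> (nat \<Rightarrow> real)
   \<Rightarrow> (nat \<Rightarrow> real) \<Rightarrow> real \<Rightarrow> bool" where
  "swss_value I J E lamhat mu theta p v \<longleftrightarrow>
     (\<exists>\<kappa>. swss_feasible I J E lamhat mu theta p v \<kappa>) \<and>
     (\<forall>\<theta> \<kappa>. swss_feasible I J E lamhat mu theta p \<theta> \<kappa> \<longrightarrow> \<theta> \<le> v)"

end

theory Submission imports Defs begin

text \<open>At an optimum of the SWSS program every class constraint is tight: if one were slack,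
  shifting capacity inside pools along the tree would make all of them slack, and the value
  could be raised. Writing an optimal \<open>\<kappa>\<close> as \<open>\<xi>* \<nu>hat + (\<mu>hat/\<mu>) z* + d\<close>, the
  allocation \<open>N\<^sup>n\<^sub>i\<^sub>j + \<surd>n d\<^sub>i\<^sub>j\<close>, rounded to integers without changing the pool sizes,
  serves class \<open>i\<close> at rate \<open>n \<lambda>\<^sub>i + \<surd>n \<Sum>\<^sub>j \<mu>\<^sub>i\<^sub>j \<kappa>\<^sub>i\<^sub>j + o(\<surd>n) = \<lambda>\<^sup>n\<^sub>i + \<vartheta>\<^sub>p p\<^sub>i \<surd>n + o(\<surd>n)\<close>.\<close>

lemma finite_Jset: "finite E \<Longrightarrow> finite (Jset E i)"
  unfolding Jset_def by (rule finite_subset[of _ "snd ` E"]) (auto intro: rev_image_eqI)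

lemma finite_Iset: "finite E \<Longrightarrow> finite (Iset E j)"
  unfolding Iset_def by (rule finite_subset[of _ "fst ` E"]) (auto intro: rev_image_eqI)

lemma bip_tree_subset: "bip_tree I J E \<Longrightarrow> E \<subseteq> {1..I} \<times> {1..J}"
  unfolding bip_tree_def by (elim conjE)

lemma bip_tree_finite: "bip_tree I J E \<Longrightarrow> finite E"
  by (rule finite_subset[OF bip_tree_subset]) auto

lemma bip_tree_classes_connected:
  assumes "bip_tree I J E" "a \<in> {1..I}" "b \<in> {1..I}"
  shows "(Inl a, Inl b) \<in> (bip_adj E)\<^sup>*"
proof -
  have "\<forall>u \<in> Inl ` {1..I} \<union> Inr ` {1..J}. \<forall>v \<in> Inl ` {1..I} \<union> Inr ` {1..J}. (u, v) \<in> (bip_adj E)\<^sup>*"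
    using assms(1) unfolding bip_tree_def by (elim conjE)
  then show ?thesis using assms(2,3) by blast
qed

lemma rtrancl_boundary_edge:
  assumes "(u, v) \<in> r\<^sup>*" "Q u" "\<not> Q v"
  obtains x y where "(x, y) \<in> r" "Q x" "\<not> Q y"
  using assms by (induction rule: rtrancl_induct) blast+

section \<open>Tightness of the SWSS optimum\<close>

definition swss_slack ::
  "(nat \<times> nat) set \<Rightarrow> (nat \<Rightarrow> real) \<Rightarrow> (nat \<Rightarrow> nat \<Rightarrow> real) \<Rightarrow> (nat \<Rightarrow> real) \<Rightarrow> real
   \<Rightarrow> (nat \<Rightarrow> nat \<Rightarrow> real) \<Rightarrow> nat \<Rightarrow> real" where
  "swss_slack E lamhat mu p v \<kappa> i = (\<Sum>j \<in> Jset E i. mu i j * \<kappa> i j) - v * p i - lamhat i"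

lemma swss_feasible_slack:
  "swss_feasible I J E lamhat mu theta p v \<kappa> \<longleftrightarrow> in_RG E \<kappa> \<and>
     (\<forall>i \<in> {1..I}. 0 \<le> swss_slack E lamhat mu p v \<kappa> i) \<and>
     (\<forall>j \<in> {1..J}. (\<Sum>i \<in> Iset E j. \<kappa> i j) = theta j)"
  unfolding swss_feasible_def swss_slack_def by auto

definition pool_transfer ::
  "(nat \<Rightarrow> nat \<Rightarrow> real) \<Rightarrow> nat \<Rightarrow> nat \<Rightarrow> nat \<Rightarrow> real \<Rightarrow> nat \<Rightarrow> nat \<Rightarrow> real" where
  "pool_transfer \<kappa> j i0 i1 \<delta> = (\<lambda>i j'. \<kappa> i j'
     + (if i = i1 \<and> j' = j then \<delta> else 0) - (if i = i0 \<and> j' = j then \<delta> else 0))"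

lemma in_RG_pool_transfer:
  "in_RG E \<kappa> \<Longrightarrow> (i0, j) \<in> E \<Longrightarrow> (i1, j) \<in> E \<Longrightarrow> in_RG E (pool_transfer \<kappa> j i0 i1 \<delta>)"
  unfolding in_RG_def pool_transfer_def by auto

lemma pool_sum_pool_transfer:
  assumes "finite E" "(i0, j) \<in> E" "(i1, j) \<in> E"
  shows "(\<Sum>i \<in> Iset E j'. pool_transfer \<kappa> j i0 i1 \<delta> i j') = (\<Sum>i \<in> Iset E j'. \<kappa> i j')"
proof (cases "j' = j")
  case True
  have "i0 \<in> Iset E j" "i1 \<in> Iset E j" using assms(2,3) unfolding Iset_def by auto
  with True show ?thesis
    using finite_Iset[OF assms(1)] unfolding pool_transfer_def by (simp add: sum.distrib sum_subtractf)
qed (simp add: pool_transfer_def)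

lemma swss_slack_pool_transfer:
  assumes "finite E" "(i0, j) \<in> E" "(i1, j) \<in> E"
  shows "swss_slack E lamhat mu p v (pool_transfer \<kappa> j i0 i1 \<delta>) i = swss_slack E lamhat mu p v \<kappa> i
    + (if i = i1 then mu i1 j * \<delta> else 0) - (if i = i0 then mu i0 j * \<delta> else 0)"
proof -
  have delta: "(\<Sum>j' \<in> Jset E i. if j' = j then mu i j' * (if i = k then \<delta> else 0) else 0)
      = (if i = k then mu k j * \<delta> else 0)" if "(k, j) \<in> E" for k
    using that finite_Jset[OF assms(1), of i] by (simp add: Jset_def)
  have "(\<Sum>j' \<in> Jset E i. mu i j' * pool_transfer \<kappa> j i0 i1 \<delta> i j')
      = (\<Sum>j' \<in> Jset E i. mu i j' * \<kappa> i j')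
        + (\<Sum>j' \<in> Jset E i. if j' = j then mu i j' * (if i = i1 then \<delta> else 0) else 0)
        - (\<Sum>j' \<in> Jset E i. if j' = j then mu i j' * (if i = i0 then \<delta> else 0) else 0)"
    unfolding pool_transfer_def sum.distrib[symmetric] sum_subtractf[symmetric]
    by (intro sum.cong) (auto simp: algebra_simps)
  then show ?thesis unfolding swss_slack_def delta[OF assms(2)] delta[OF assms(3)] by simp
qed

lemma swss_slack_spread:
  assumes tree: "bip_tree I J E" and mu_pos: "\<And>i j. (i, j) \<in> E \<Longrightarrow> mu i j > 0"
    and feas: "swss_feasible I J E lamhat mu theta p v \<kappa>"
    and a: "a \<in> {1..I}" "0 < swss_slack E lamhat mu p v \<kappa> a"
    and b: "b \<in> {1..I}" "swss_slack E lamhat mu p v \<kappa> b = 0"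
  obtains \<kappa>' i1 where "swss_feasible I J E lamhat mu theta p v \<kappa>'"
    and "\<forall>i \<in> {1..I}. 0 < swss_slack E lamhat mu p v \<kappa> i \<longrightarrow> 0 < swss_slack E lamhat mu p v \<kappa>' i"
    and "i1 \<in> {1..I}" "swss_slack E lamhat mu p v \<kappa> i1 = 0" "0 < swss_slack E lamhat mu p v \<kappa>' i1"
proof -
  let ?s = "swss_slack E lamhat mu p v"
  have finE: "finite E" by (rule bip_tree_finite[OF tree])
  have E_sub: "E \<subseteq> {1..I} \<times> {1..J}" by (rule bip_tree_subset[OF tree])
  define S where "S = {i \<in> {1..I}. 0 < ?s \<kappa> i}"
  define Q where "Q = (\<lambda>x. case x of Inl i \<Rightarrow> i \<in> S | Inr j \<Rightarrow> (\<exists>i \<in> S. (i, j) \<in> E))"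
  \<comment> \<open>The path from \<open>a\<close> to \<open>b\<close> leaves \<open>S\<close> through a pool \<open>j\<close> shared by \<open>i0 \<in> S\<close> and \<open>i1 \<notin> S\<close>;
    moving half of \<open>i0\<close>'s slack worth of \<open>\<kappa> i0 j\<close> to \<open>i1\<close> makes \<open>i1\<close> slack too.\<close>
  have "Q (Inl a)" "\<not> Q (Inl b)" using a b by (auto simp: Q_def S_def)
  then obtain x y where "(x, y) \<in> bip_adj E" "Q x" "\<not> Q y"
    by (rule rtrancl_boundary_edge[OF bip_tree_classes_connected[OF tree a(1) b(1)]])
  then obtain i0 i1 j where e0: "(i0, j) \<in> E" and e1: "(i1, j) \<in> E" and i0S: "i0 \<in> S" and i1S: "i1 \<notin> S"
    unfolding bip_adj_def Q_def by auto
  have i1I: "i1 \<in> {1..I}" using e1 E_sub by auto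
  have ne: "i0 \<noteq> i1" using i0S i1S by auto
  have tight1: "?s \<kappa> i1 = 0"
    using feas i1I i1S unfolding swss_feasible_slack S_def by force
  define \<delta> where "\<delta> = ?s \<kappa> i0 / (2 * mu i0 j)"
  define \<kappa>' where "\<kappa>' = pool_transfer \<kappa> j i0 i1 \<delta>"
  have mu0: "mu i0 j > 0" and mu1: "mu i1 j > 0" using mu_pos e0 e1 by auto
  have slack0: "0 < ?s \<kappa> i0" using i0S unfolding S_def by simp
  have half: "mu i0 j * \<delta> = ?s \<kappa> i0 / 2" unfolding \<delta>_def using mu0 by simp
  have gain: "0 < mu i1 j * \<delta>" unfolding \<delta>_def using mu0 mu1 slack0 by simp
  have s': "?s \<kappa>' i = ?s \<kappa> i + (if i = i1 then mu i1 j * \<delta> else 0) - (if i = i0 then mu i0 j * \<delta> else 0)" for i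
    unfolding \<kappa>'_def by (rule swss_slack_pool_transfer[OF finE e0 e1])
  have pos: "0 < ?s \<kappa>' i" if "0 < ?s \<kappa> i" for i
    using s'[of i] ne half gain that by (cases "i = i0") auto
  have nonneg: "0 \<le> ?s \<kappa>' i" if "0 \<le> ?s \<kappa> i" for i
    using s'[of i] half slack0 gain that by (cases "i = i0") auto
  have "swss_feasible I J E lamhat mu theta p v \<kappa>'"
    using feas nonneg in_RG_pool_transfer[OF _ e0 e1]
    unfolding swss_feasible_slack \<kappa>'_def pool_sum_pool_transfer[OF finE e0 e1] by blast
  then show thesis
    by (rule that) (use pos i1I tight1 s'[of i1] ne gain in auto)
qed

lemma swss_all_slack:
  assumes tree: "bip_tree I J E" and mu_pos: "\<And>i j. (i, j) \<in> E \<Longrightarrow> mu i j > 0"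
    and feas: "swss_feasible I J E lamhat mu theta p v \<kappa>"
    and a: "a \<in> {1..I}" "0 < swss_slack E lamhat mu p v \<kappa> a"
  obtains \<kappa>' where "swss_feasible I J E lamhat mu theta p v \<kappa>'"
    and "\<forall>i \<in> {1..I}. 0 < swss_slack E lamhat mu p v \<kappa>' i"
proof -
  let ?s = "swss_slack E lamhat mu p v"
  define tight where "tight \<kappa> = {i \<in> {1..I}. \<not> 0 < ?s \<kappa> i}" for \<kappa>
  have "\<exists>\<kappa>'. swss_feasible I J E lamhat mu theta p v \<kappa>' \<and> (\<forall>i \<in> {1..I}. 0 < ?s \<kappa>' i)"
    if "card (tight \<kappa>) = n" "swss_feasible I J E lamhat mu theta p v \<kappa>" "0 < ?s \<kappa> a" for n \<kappa>
    using that
  proof (induction n arbitrary: \<kappa> rule: less_induct)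
    case (less n)
    show ?case
    proof (cases "tight \<kappa> = {}")
      case True
      then have "\<forall>i \<in> {1..I}. 0 < ?s \<kappa> i" unfolding tight_def by blast
      then show ?thesis using less.prems(2) by blast
    next
      case False
      then obtain b where b: "b \<in> {1..I}" "\<not> 0 < ?s \<kappa> b" unfolding tight_def by blast
      moreover have "0 \<le> ?s \<kappa> b" using less.prems(2) b(1) unfolding swss_feasible_slack by blast
      ultimately have "?s \<kappa> b = 0" by simp
      then obtain \<kappa>' i1 where feas': "swss_feasible I J E lamhat mu theta p v \<kappa>'"
        and pos: "\<forall>i \<in> {1..I}. 0 < ?s \<kappa> i \<longrightarrow> 0 < ?s \<kappa>' i"
        and i1: "i1 \<in> {1..I}" "?s \<kappa> i1 = 0" "0 < ?s \<kappa>' i1"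
        using swss_slack_spread[OF tree mu_pos less.prems(2) a(1) less.prems(3) b(1)] by blast
      have "tight \<kappa>' \<subseteq> tight \<kappa>" using pos unfolding tight_def by blast
      moreover have "i1 \<in> tight \<kappa> - tight \<kappa>'" using i1 unfolding tight_def by simp
      ultimately have "tight \<kappa>' \<subset> tight \<kappa>" by blast
      then have "card (tight \<kappa>') < n" unfolding less.prems(1)[symmetric]
        by (rule psubset_card_mono[rotated]) (simp add: tight_def)
      moreover have "0 < ?s \<kappa>' a" using pos a less.prems(3) by blast
      ultimately show ?thesis using less.IH[OF _ refl feas'] by blast
    qed
  qed
  then show thesis using feas a(2) that by blast
qed

lemma swss_value_tight:
  assumes tree: "bip_tree I J E" and mu_pos: "\<And>i j. (i, j) \<in> E \<Longrightarrow> mu i j > 0"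
    and p_pos: "\<And>i. i \<in> {1..I} \<Longrightarrow> p i > 0"
    and val: "swss_value I J E lamhat mu theta p v"
    and feas: "swss_feasible I J E lamhat mu theta p v \<kappa>"
    and i: "i \<in> {1..I}"
  shows "swss_slack E lamhat mu p v \<kappa> i = 0"
proof (rule ccontr)
  let ?s = "swss_slack E lamhat mu p v"
  assume "?s \<kappa> i \<noteq> 0"
  then have "0 < ?s \<kappa> i" using feas i unfolding swss_feasible_slack by force
  then obtain \<kappa>' where feas': "swss_feasible I J E lamhat mu theta p v \<kappa>'"
    and pos: "\<forall>k \<in> {1..I}. 0 < ?s \<kappa>' k"
    using swss_all_slack[OF tree mu_pos feas i] by blast
  \<comment> \<open>With every constraint slack, \<open>v\<close> can be raised by the smallest ratio slack/\<open>p\<close>.\<close>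
  define \<delta> where "\<delta> = Min ((\<lambda>k. ?s \<kappa>' k / p k) ` {1..I})"
  have "\<delta> > 0" unfolding \<delta>_def using i pos p_pos by simp
  moreover have "\<delta> * p k \<le> ?s \<kappa>' k" if k: "k \<in> {1..I}" for k
  proof -
    have "\<delta> \<le> ?s \<kappa>' k / p k" unfolding \<delta>_def using k by simp
    then show ?thesis using p_pos[OF k] by (simp add: field_simps)
  qed
  then have "swss_feasible I J E lamhat mu theta p (v + \<delta>) \<kappa>'"
    using feas' unfolding swss_feasible_slack swss_slack_def by (simp add: algebra_simps)
  then have "v + \<delta> \<le> v" using val unfolding swss_value_def by blast
  ultimately show False by simp
qed

lemma swss_optimal_correction:
  assumes tree: "bip_tree I J E" and mu_pos: "\<And>i j. (i, j) \<in> E \<Longrightarrow> mu i j > 0"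
    and p_pos: "\<And>i. i \<in> {1..I} \<Longrightarrow> p i > 0"
    and \<xi>_sum: "\<And>j. j \<in> {1..J} \<Longrightarrow> (\<Sum>i \<in> Iset E j. \<xi> i j) = 1"
    and val: "swss_value I J E lamhat mu
      (\<lambda>j. nuhat j + (\<Sum>i \<in> Iset E j. (muhat i j / mu i j) * (\<xi> i j * nu j))) p v"
  obtains d where "\<And>j. (\<Sum>i \<in> Iset E j. d i j) = 0"
    and "\<And>i. i \<in> {1..I} \<Longrightarrow> lamhat i =
      (\<Sum>j \<in> Jset E i. mu i j * \<xi> i j * nuhat j + mu i j * d i j + muhat i j * \<xi> i j * nu j) - v * p i"
proof -
  define \<theta> where "\<theta> = (\<lambda>j. nuhat j + (\<Sum>i \<in> Iset E j. (muhat i j / mu i j) * (\<xi> i j * nu j)))"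
  obtain \<kappa> where feas: "swss_feasible I J E lamhat mu \<theta> p v \<kappa>"
    using val unfolding swss_value_def \<theta>_def by blast
  define d where "d i j = \<kappa> i j - (\<xi> i j * nuhat j + (muhat i j / mu i j) * (\<xi> i j * nu j))" for i j
  have "(\<Sum>i \<in> Iset E j. d i j) = 0" for j
  proof (cases "j \<in> {1..J}")
    case True
    have "(\<Sum>i \<in> Iset E j. \<xi> i j * nuhat j) = nuhat j"
      using \<xi>_sum[OF True] by (simp flip: sum_distrib_right)
    then show ?thesis using feas True unfolding swss_feasible_def \<theta>_def d_def
      by (simp add: sum_subtractf sum.distrib)
  next
    case False
    then have "Iset E j = {}" using bip_tree_subset[OF tree] unfolding Iset_def by auto
    then show ?thesis by simp
  qed
  moreover have "lamhat i = (\<Sum>j \<in> Jset E i. mu i j * \<xi> i j * nuhat j + mu i j * d i j + muhat i j * \<xi> i j * nu j)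
      - v * p i" if i: "i \<in> {1..I}" for i
  proof -
    have "(\<Sum>j \<in> Jset E i. mu i j * \<xi> i j * nuhat j + mu i j * d i j + muhat i j * \<xi> i j * nu j)
        = (\<Sum>j \<in> Jset E i. mu i j * \<kappa> i j)"
    proof (rule sum.cong[OF refl])
      fix j assume "j \<in> Jset E i"
      then have "mu i j \<noteq> 0" using mu_pos by (fastforce simp: Jset_def)
      then show "mu i j * \<xi> i j * nuhat j + mu i j * d i j + muhat i j * \<xi> i j * nu j = mu i j * \<kappa> i j"
        unfolding d_def by (simp add: field_simps)
    qed
    then show ?thesis
      using swss_value_tight[OF tree mu_pos p_pos val[folded \<theta>_def] feas i] unfolding swss_slack_def by simp
  qed
  ultimately show thesis by (rule that)
qed

section \<open>Rounding with preserved pool sizes\<close>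

definition zero_sum_floor :: "'a::linorder set \<Rightarrow> ('a \<Rightarrow> real) \<Rightarrow> 'a \<Rightarrow> int" where
  "zero_sum_floor A x i = (if i = Min A then - (\<Sum>k \<in> A - {Min A}. \<lfloor>x k\<rfloor>) else \<lfloor>x i\<rfloor>)"

lemma sum_zero_sum_floor:
  assumes "finite A"
  shows "(\<Sum>i \<in> A. zero_sum_floor A x i) = 0"
proof (cases "A = {}")
  case False
  then have m: "Min A \<in> A" using assms by simp
  have "(\<Sum>i \<in> A. zero_sum_floor A x i)
      = zero_sum_floor A x (Min A) + (\<Sum>i \<in> A - {Min A}. zero_sum_floor A x i)"
    by (rule sum.remove[OF assms m])
  also have "\<dots> = 0" unfolding zero_sum_floor_def by simp
  finally show ?thesis .
qed simp

lemma zero_sum_floor_error: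
  assumes "finite A" "(\<Sum>k \<in> A. x k) = 0" "i \<in> A"
  shows "\<bar>of_int (zero_sum_floor A x i) - x i\<bar> \<le> card A"
proof (cases "i = Min A")
  case True
  let ?B = "A - {Min A}"
  have "x i = - (\<Sum>k \<in> ?B. x k)" using sum.remove[OF assms(1,3), of x] assms(2) True by simp
  then have "of_int (zero_sum_floor A x i) - x i = (\<Sum>k \<in> ?B. x k - of_int \<lfloor>x k\<rfloor>)"
    using True unfolding zero_sum_floor_def by (simp add: sum_subtractf)
  moreover have "0 \<le> (\<Sum>k \<in> ?B. x k - of_int \<lfloor>x k\<rfloor>)" by (intro sum_nonneg) simp
  moreover have "(\<Sum>k \<in> ?B. x k - of_int \<lfloor>x k\<rfloor>) \<le> (\<Sum>k \<in> ?B. 1)"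
    by (intro sum_mono) linarith
  moreover have "card ?B \<le> card A" using assms(1) by (intro card_mono) auto
  ultimately show ?thesis by simp
next
  case False
  have "1 \<le> card A" using assms(1,3) by (metis One_nat_def Suc_leI card_gt_0_iff empty_iff)
  then show ?thesis using False unfolding zero_sum_floor_def by simp linarith
qed

lemma card_Iset_le: "finite E \<Longrightarrow> card (Iset E j) \<le> card E"
  unfolding Iset_def by (rule card_inj_on_le[where f = "\<lambda>i. (i, j)"]) (auto simp: inj_on_def)

lemma pool_preserving_rounding:
  fixes d :: "nat \<Rightarrow> nat \<Rightarrow> real"
  assumes "finite E" and pool_sum: "\<And>j. (\<Sum>i \<in> Iset E j. d i j) = 0"
  obtains C :: real and r :: "nat \<Rightarrow> nat \<Rightarrow> nat \<Rightarrow> int" where "C > 0"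
    and "\<And>n j. (\<Sum>i \<in> Iset E j. r n i j) = 0"
    and "\<And>n i j. (i, j) \<in> E \<Longrightarrow> \<bar>of_int (r n i j) - sqrt (real n) * d i j\<bar> \<le> card E"
    and "\<And>n i j. (i, j) \<in> E \<Longrightarrow> 1 \<le> n \<Longrightarrow> \<bar>of_int (r n i j)\<bar> \<le> C * sqrt (real n)"
proof
  define r where "r n i j = zero_sum_floor (Iset E j) (\<lambda>i. sqrt (real n) * d i j) i" for n i j
  define C where "C = (\<Sum>e \<in> E. \<bar>d (fst e) (snd e)\<bar>) + card E + 1"
  show "(\<Sum>i \<in> Iset E j. r n i j) = 0" for n j
    unfolding r_def by (rule sum_zero_sum_floor[OF finite_Iset[OF assms(1)]])
  show err: "\<bar>of_int (r n i j) - sqrt (real n) * d i j\<bar> \<le> card E" if "(i, j) \<in> E" for n i j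
  proof -
    have "\<bar>of_int (r n i j) - sqrt (real n) * d i j\<bar> \<le> card (Iset E j)"
      unfolding r_def using that finite_Iset[OF assms(1)] pool_sum
      by (intro zero_sum_floor_error) (auto simp: Iset_def sum_distrib_left[symmetric])
    also have "\<dots> \<le> card E" using card_Iset_le[OF assms(1)] by simp
    finally show ?thesis .
  qed
  have d_le: "\<bar>d i j\<bar> \<le> (\<Sum>e \<in> E. \<bar>d (fst e) (snd e)\<bar>)" if "(i, j) \<in> E" for i j
    using member_le_sum[OF that, of "\<lambda>e. \<bar>d (fst e) (snd e)\<bar>"] assms(1) by simp
  have "0 \<le> (\<Sum>e \<in> E. \<bar>d (fst e) (snd e)\<bar>)" by (intro sum_nonneg) simp
  then show "C > 0" unfolding C_def by linarith
  show "\<bar>of_int (r n i j)\<bar> \<le> C * sqrt (real n)" if "(i, j) \<in> E" "1 \<le> n" for n i j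
  proof -
    have s: "1 \<le> sqrt (real n)" using that(2) by simp
    have "\<bar>of_int (r n i j)\<bar> \<le> sqrt (real n) * \<bar>d i j\<bar> + card E"
      using err[OF that(1), of n] abs_mult[of "sqrt (real n)" "d i j"] by simp
    also have "\<dots> \<le> sqrt (real n) * \<bar>d i j\<bar> + sqrt (real n) * card E"
      using mult_right_mono[OF s, of "card E"] by simp
    also have "\<dots> \<le> C * sqrt (real n)"
    proof -
      have "sqrt (real n) * \<bar>d i j\<bar> \<le> sqrt (real n) * (\<Sum>e \<in> E. \<bar>d (fst e) (snd e)\<bar>)"
        using d_le[OF that(1)] by (simp add: mult_left_mono)
      moreover have "C * sqrt (real n) = sqrt (real n) * (\<Sum>e \<in> E. \<bar>d (fst e) (snd e)\<bar>)
          + sqrt (real n) * card E + sqrt (real n)"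
        unfolding C_def by (simp add: algebra_simps)
      ultimately show ?thesis using s by linarith
    qed
    finally show ?thesis .
  qed
qed

section \<open>Diffusion-scale asymptotics\<close>

lemma tendsto_inverse_sqrt_nat: "(\<lambda>n. 1 / sqrt (real n)) \<longlonglongrightarrow> 0"
proof -
  have "(\<lambda>n. sqrt (inverse (real n))) \<longlonglongrightarrow> sqrt 0"
    by (intro tendsto_real_sqrt lim_inverse_n)
  then show ?thesis by (simp add: real_sqrt_inverse divide_inverse)
qed

lemma eventually_pos_near_linear_growth:
  fixes x y :: "nat \<Rightarrow> real"
  assumes lim: "(\<lambda>n. x n / real n) \<longlonglongrightarrow> c" and "0 < c"
    and near: "\<And>n. 1 \<le> n \<Longrightarrow> \<bar>y n - x n\<bar> \<le> C * sqrt (real n) + K"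
  shows "\<forall>\<^sub>F n in sequentially. 0 < y n"
proof -
  have "(\<lambda>n. x n / real n - C * (1 / sqrt (real n)) - K / real n) \<longlonglongrightarrow> c - C * 0 - 0"
    by (intro tendsto_intros lim tendsto_inverse_sqrt_nat)
  then have "\<forall>\<^sub>F n in sequentially. 0 < x n / real n - C * (1 / sqrt (real n)) - K / real n"
    using \<open>0 < c\<close> by (intro order_tendstoD(1)) auto
  then show ?thesis using eventually_ge_at_top[of 1]
  proof eventually_elim
    case (elim n)
    then have "0 < real n" by simp
    have "C * sqrt (real n) = real n * (C * (1 / sqrt (real n)))"
      using \<open>0 < real n\<close> by (simp add: field_simps)
    then have "0 < x n - C * sqrt (real n) - K"
      using mult_pos_pos[OF \<open>0 < real n\<close> elim(1)] \<open>0 < real n\<close> by (simp add: algebra_simps)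
    then show ?case using near[OF elim(2)] by linarith
  qed
qed

lemma tendsto_scaled_capacity:
  fixes m N Nt e :: "nat \<Rightarrow> real"
  assumes X: "(\<lambda>n. sqrt (real n) * (m n - mu)) \<longlonglongrightarrow> muhat"
    and Y: "(\<lambda>n. sqrt (real n) * (N n / real n - nu)) \<longlonglongrightarrow> nuhat"
    and e: "\<And>n. \<bar>e n\<bar> \<le> K"
    and Nt: "\<forall>\<^sub>F n in sequentially. Nt n = \<xi> * N n + sqrt (real n) * d + e n"
  shows "(\<lambda>n. m n * Nt n / sqrt (real n) - sqrt (real n) * (mu * \<xi> * nu))
    \<longlonglongrightarrow> mu * \<xi> * nuhat + mu * d + muhat * \<xi> * nu"
proof -
  define s where "s n = sqrt (real n)" for n
  define X where "X n = s n * (m n - mu)" for n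
  define Y where "Y n = s n * (N n / real n - nu)" for n
  have inv_s: "(\<lambda>n. 1 / s n) \<longlonglongrightarrow> 0" unfolding s_def by (rule tendsto_inverse_sqrt_nat)
  have e_s: "(\<lambda>n. e n / s n) \<longlonglongrightarrow> 0"
  proof (rule Lim_null_comparison)
    show "\<forall>\<^sub>F n in sequentially. norm (e n / s n) \<le> K * (1 / s n)"
      using e by (intro always_eventually allI) (simp add: s_def abs_div divide_right_mono)
    show "(\<lambda>n. K * (1 / s n)) \<longlonglongrightarrow> 0" using tendsto_mult_right_zero[OF inv_s] .
  qed
  \<comment> \<open>Substitute \<open>m = mu + X/s\<close> and \<open>N = s\<^sup>2 nu + s Y\<close>; the expression becomes a polynomial
    in \<open>X\<close>, \<open>Y\<close>, \<open>1/s\<close> and \<open>e/s\<close>.\<close>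
  define F where "F n = mu * \<xi> * Y n + mu * d + mu * (e n / s n) + X n * \<xi> * nu
      + X n * (1 / s n) * (\<xi> * Y n + d + e n / s n)" for n
  have "F \<longlonglongrightarrow> mu * \<xi> * nuhat + mu * d + mu * 0 + muhat * \<xi> * nu + muhat * 0 * (\<xi> * nuhat + d + 0)"
    unfolding F_def using X Y unfolding X_def Y_def s_def by (intro tendsto_intros e_s[unfolded s_def] inv_s[unfolded s_def])
  then have lim: "F \<longlonglongrightarrow> mu * \<xi> * nuhat + mu * d + muhat * \<xi> * nu" by simp
  have "\<forall>\<^sub>F n in sequentially. F n = m n * Nt n / sqrt (real n) - sqrt (real n) * (mu * \<xi> * nu)"
    using Nt eventually_ge_at_top[of 1]
  proof eventually_elim
    case (elim n)
    have sp: "s n > 0" using elim(2) unfolding s_def by simp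
    have m: "m n = mu + X n / s n" unfolding X_def using sp by simp
    have "N n = s n * s n * nu + s n * Y n"
      unfolding Y_def s_def using elim(2) by (simp add: field_simps)
    then show ?case unfolding F_def elim(1) m s_def[symmetric] using sp by (simp add: field_simps)
  qed
  then show ?thesis by (rule Lim_transform_eventually[OF lim])
qed

lemma tendsto_class_residual:
  fixes A :: "'a set" and lamn :: "nat \<Rightarrow> real" and mun N Nt e :: "nat \<Rightarrow> 'a \<Rightarrow> real"
  assumes "finite A"
    and lam: "(\<lambda>n. (lamn n - real n * lam) / sqrt (real n)) \<longlonglongrightarrow> lamhat"
    and balance: "lam = (\<Sum>j \<in> A. mu j * \<xi> j * nu j)"
    and mu: "\<And>j. j \<in> A \<Longrightarrow> (\<lambda>n. sqrt (real n) * (mun n j - mu j)) \<longlonglongrightarrow> muhat j"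
    and nu: "\<And>j. j \<in> A \<Longrightarrow> (\<lambda>n. sqrt (real n) * (N n j / real n - nu j)) \<longlonglongrightarrow> nuhat j"
    and e: "\<And>n j. j \<in> A \<Longrightarrow> \<bar>e n j\<bar> \<le> K"
    and Nt: "\<And>j. j \<in> A \<Longrightarrow> \<forall>\<^sub>F n in sequentially. Nt n j = \<xi> j * N n j + sqrt (real n) * d j + e n j"
  shows "(\<lambda>n. (lamn n - (\<Sum>j \<in> A. mun n j * Nt n j)) / sqrt (real n))
    \<longlonglongrightarrow> lamhat - (\<Sum>j \<in> A. mu j * \<xi> j * nuhat j + mu j * d j + muhat j * \<xi> j * nu j)"
proof -
  define T where "T n = (lamn n - real n * lam) / sqrt (real n)
    - (\<Sum>j \<in> A. mun n j * Nt n j / sqrt (real n) - sqrt (real n) * (mu j * \<xi> j * nu j))" for n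
  have "(\<lambda>n. mun n j * Nt n j / sqrt (real n) - sqrt (real n) * (mu j * \<xi> j * nu j))
      \<longlonglongrightarrow> mu j * \<xi> j * nuhat j + mu j * d j + muhat j * \<xi> j * nu j" if "j \<in> A" for j
    using that by (intro tendsto_scaled_capacity[where N = "\<lambda>n. N n j" and e = "\<lambda>n. e n j" and K = K] mu nu e Nt)
  then have "T \<longlonglongrightarrow> lamhat - (\<Sum>j \<in> A. mu j * \<xi> j * nuhat j + mu j * d j + muhat j * \<xi> j * nu j)"
    unfolding T_def by (intro tendsto_intros lam tendsto_sum)
  moreover have "T = (\<lambda>n. (lamn n - (\<Sum>j \<in> A. mun n j * Nt n j)) / sqrt (real n))" (is "_ = ?f")
  proof
    fix n
    have "real n * lam / sqrt (real n) = sqrt (real n) * lam"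
      by (metis mult.commute real_div_sqrt of_nat_0_le_iff times_divide_eq_left)
    also have "\<dots> = (\<Sum>j \<in> A. sqrt (real n) * (mu j * \<xi> j * nu j))"
      unfolding balance by (rule sum_distrib_left)
    finally show "T n = ?f n" unfolding T_def
      by (simp add: diff_divide_distrib sum_subtractf sum_divide_distrib)
  qed
  ultimately show ?thesis by simp
qed

lemma abs_diff_le_1_between_floor_ceiling:
  fixes x :: real
  assumes "\<lfloor>x\<rfloor> \<le> k" "k \<le> \<lceil>x\<rceil>"
  shows "\<bar>of_int k - x\<bar> \<le> 1"
proof -
  have "x < of_int k + 1" using assms(1) by (simp add: floor_le_iff)
  moreover have "of_int k - 1 < x" using assms(2) by (simp add: le_ceiling_iff)
  ultimately show ?thesis by linarith
qed

lemma rounded_allocation: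
  fixes M :: "nat \<Rightarrow> nat \<Rightarrow> nat \<Rightarrow> nat" and a :: "nat \<Rightarrow> nat \<Rightarrow> nat \<Rightarrow> real"
    and d c :: "nat \<Rightarrow> nat \<Rightarrow> real"
  assumes finE: "finite E" and pool_sum: "\<And>j. (\<Sum>i \<in> Iset E j. d i j) = 0"
    and near: "\<And>n i j. (i, j) \<in> E \<Longrightarrow> \<bar>real (M n i j) - a n i j\<bar> \<le> 1"
    and growth: "\<And>i j. (i, j) \<in> E \<Longrightarrow> (\<lambda>n. a n i j / real n) \<longlonglongrightarrow> c i j"
    and c_pos: "\<And>i j. (i, j) \<in> E \<Longrightarrow> 0 < c i j"
  obtains C :: real and e :: "nat \<Rightarrow> nat \<Rightarrow> nat \<Rightarrow> real" and K :: real
    and Nt :: "nat \<Rightarrow> nat \<Rightarrow> nat \<Rightarrow> nat"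
  where "C > 0" and "\<And>n i j. (i, j) \<in> E \<Longrightarrow> \<bar>e n i j\<bar> \<le> K"
    and "\<forall>\<^sub>F n in sequentially.
      (\<forall>j. (\<Sum>i \<in> Iset E j. Nt n i j) = (\<Sum>i \<in> Iset E j. M n i j)) \<and>
      (\<forall>(i, j) \<in> E. \<bar>real (M n i j) - real (Nt n i j)\<bar> \<le> C * sqrt (real n) \<and>
         real (Nt n i j) = a n i j + sqrt (real n) * d i j + e n i j)"
proof -
  obtain C r where "C > 0" and r_sum: "\<And>n j. (\<Sum>i \<in> Iset E j. r n i j) = 0"
    and r_err: "\<And>n i j. (i, j) \<in> E \<Longrightarrow> \<bar>of_int (r n i j) - sqrt (real n) * d i j\<bar> \<le> card E"
    and r_bound: "\<And>n i j. (i, j) \<in> E \<Longrightarrow> 1 \<le> n \<Longrightarrow> \<bar>of_int (r n i j)\<bar> \<le> C * sqrt (real n)"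
    using pool_preserving_rounding[OF finE pool_sum] by metis
  define Nt where "Nt n i j = nat (int (M n i j) + r n i j)" for n i j
  define e where "e n i j = real (M n i j) - a n i j + (of_int (r n i j) - sqrt (real n) * d i j)" for n i j
  have "\<bar>e n i j\<bar> \<le> 1 + card E" if "(i, j) \<in> E" for n i j
    using near[OF that, of n] r_err[OF that, of n] unfolding e_def by linarith
  moreover have "\<forall>\<^sub>F n in sequentially. \<forall>(i, j) \<in> E. 0 < int (M n i j) + r n i j"
  proof (intro eventually_ball_finite[OF finE] ballI, clarify)
    fix i j assume ij: "(i, j) \<in> E"
    have "\<bar>real_of_int (int (M n i j) + r n i j) - a n i j\<bar> \<le> C * sqrt (real n) + 1" if "1 \<le> n" for n
      using near[OF ij, of n] r_bound[OF ij that] by simp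
    then have "\<forall>\<^sub>F n in sequentially. 0 < real_of_int (int (M n i j) + r n i j)"
      by (rule eventually_pos_near_linear_growth[OF growth[OF ij] c_pos[OF ij]])
    then show "\<forall>\<^sub>F n in sequentially. 0 < int (M n i j) + r n i j"
      by (simp only: of_int_0_less_iff)
  qed
  then have "\<forall>\<^sub>F n in sequentially.
      (\<forall>j. (\<Sum>i \<in> Iset E j. Nt n i j) = (\<Sum>i \<in> Iset E j. M n i j)) \<and>
      (\<forall>(i, j) \<in> E. \<bar>real (M n i j) - real (Nt n i j)\<bar> \<le> C * sqrt (real n) \<and>
         real (Nt n i j) = a n i j + sqrt (real n) * d i j + e n i j)"
    using eventually_ge_at_top[of 1]
  proof eventually_elim
    case (elim n)
    then have Nt: "int (Nt n i j) = int (M n i j) + r n i j" if "(i, j) \<in> E" for i j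
      using that unfolding Nt_def by fastforce
    have "(\<Sum>i \<in> Iset E j. Nt n i j) = (\<Sum>i \<in> Iset E j. M n i j)" for j
    proof -
      have "int (\<Sum>i \<in> Iset E j. Nt n i j) = int (\<Sum>i \<in> Iset E j. M n i j)"
        using r_sum[of n j] by (simp add: Nt Iset_def sum.distrib)
      then show ?thesis by (simp only: of_nat_eq_iff)
    qed
    moreover have "\<bar>real (M n i j) - real (Nt n i j)\<bar> \<le> C * sqrt (real n)" if "(i, j) \<in> E" for i j
      using r_bound[OF that elim(2)] Nt[OF that] by (simp add: of_int_eq_iff[symmetric, where 'a = real])
    moreover have "real (Nt n i j) = a n i j + sqrt (real n) * d i j + e n i j" if "(i, j) \<in> E" for i j
      using Nt[OF that] unfolding e_def by (simp add: of_int_eq_iff[symmetric, where 'a = real])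
    ultimately show ?case by blast
  qed
  ultimately show thesis using that \<open>C > 0\<close> by blast
qed

theorem lemma5:
  fixes I J :: nat and E :: "(nat \<times> nat) set"
    and lamn :: "nat \<Rightarrow> nat \<Rightarrow> real"      \<comment> \<open>\<open>lamn n i = \<lambda>^n_i\<close>\<close>
    and mun :: "nat \<Rightarrow> nat \<Rightarrow> nat \<Rightarrow> real"  \<comment> \<open>\<open>mun n i j = \<mu>^n_ij\<close>\<close>
    and Nn :: "nat \<Rightarrow> nat \<Rightarrow> nat"          \<comment> \<open>\<open>Nn n j = N^n_j\<close>\<close>
    and Nnij :: "nat \<Rightarrow> nat \<Rightarrow> nat \<Rightarrow> nat"   \<comment> \<open>\<open>Nnij n i j = N^n_ij\<close>\<close>
    and lam nu lamhat nuhat :: "nat \<Rightarrow> real"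
    and mu muhat :: "nat \<Rightarrow> nat \<Rightarrow> real"
    and \<xi>s :: "nat \<Rightarrow> nat \<Rightarrow> real"
    and p :: "nat \<Rightarrow> real" and vp :: real
  assumes tree: "bip_tree I J E"
    and lamn_pos: "\<And>n i. i \<in> {1..I} \<Longrightarrow> lamn n i > 0"
    and mun_pos: "\<And>n i j. (i, j) \<in> E \<Longrightarrow> mun n i j > 0"
    and lam_pos: "\<And>i. i \<in> {1..I} \<Longrightarrow> lam i > 0"
    and nu_pos: "\<And>j. j \<in> {1..J} \<Longrightarrow> nu j > 0"
    and mu_pos: "\<And>i j. (i, j) \<in> E \<Longrightarrow> mu i j > 0"
    and lim_lam: "\<And>i. i \<in> {1..I} \<Longrightarrow> (\<lambda>n. lamn n i / real n) \<longlonglongrightarrow> lam i"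
    and lim_N: "\<And>j. j \<in> {1..J} \<Longrightarrow> (\<lambda>n. real (Nn n j) / real n) \<longlonglongrightarrow> nu j"
    and lim_mu: "\<And>i j. (i, j) \<in> E \<Longrightarrow> (\<lambda>n. mun n i j) \<longlonglongrightarrow> mu i j"
    and lim_lamhat: "\<And>i. i \<in> {1..I} \<Longrightarrow>
        (\<lambda>n. (lamn n i - real n * lam i) / sqrt (real n)) \<longlonglongrightarrow> lamhat i"
    and lim_muhat: "\<And>i j. (i, j) \<in> E \<Longrightarrow>
        (\<lambda>n. sqrt (real n) * (mun n i j - mu i j)) \<longlonglongrightarrow> muhat i j"
    and lim_nuhat: "\<And>j. j \<in> {1..J} \<Longrightarrow>
        (\<lambda>n. sqrt (real n) * (real (Nn n j) / real n - nu j)) \<longlonglongrightarrow> nuhat j"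
    and crp: "crp_unique_solution I J E lam mu nu \<xi>s"
    and crp_sum: "\<And>j. j \<in> {1..J} \<Longrightarrow> (\<Sum>i \<in> Iset E j. \<xi>s i j) = 1"
    and crp_pos: "\<And>i j. (i, j) \<in> E \<Longrightarrow> \<xi>s i j > 0"
    and Nij_lb: "\<And>n i j. (i, j) \<in> E \<Longrightarrow> \<lfloor>\<xi>s i j * real (Nn n j)\<rfloor> \<le> int (Nnij n i j)"
    and Nij_ub: "\<And>n i j. (i, j) \<in> E \<Longrightarrow> int (Nnij n i j) \<le> \<lceil>\<xi>s i j * real (Nn n j)\<rceil>"
    and Nij_sum: "\<And>n j. j \<in> {1..J} \<Longrightarrow> (\<Sum>i \<in> Iset E j. Nnij n i j) = Nn n j"
    and p_pos: "\<And>i. i \<in> {1..I} \<Longrightarrow> p i > 0"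
    and p_sum: "(\<Sum>i \<in> {1..I}. p i) = 1"
    and vp_def: "swss_value I J E lamhat mu
        (\<lambda>j. nuhat j + (\<Sum>i \<in> Iset E j. (muhat i j / mu i j) * (\<xi>s i j * nu j))) p vp"
    and vp_pos: "vp > 0"
  shows "\<exists>Nt :: nat \<Rightarrow> nat \<Rightarrow> nat \<Rightarrow> nat. \<exists>C0 > 0. \<exists>\<epsilon> :: nat \<Rightarrow> nat \<Rightarrow> real.
    (\<forall>i \<in> {1..I}. (\<lambda>n. \<epsilon> n i / sqrt (real n)) \<longlonglongrightarrow> 0) \<and>
    (\<forall>\<^sub>F n in sequentially.
       (\<forall>i \<in> {1..I}. lamn n i =
          (\<Sum>j \<in> Jset E i. mun n i j * real (Nt n i j)) - vp * p i * sqrt (real n) + \<epsilon> n i) \<and>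
       (\<forall>(i, j) \<in> E. \<bar>real (Nnij n i j) - real (Nt n i j)\<bar> \<le> C0 * sqrt (real n)) \<and>
       (\<forall>j \<in> {1..J}. (\<Sum>i \<in> Iset E j. Nt n i j) = Nn n j))"
proof -
  obtain d where d_pool: "\<And>j. (\<Sum>i \<in> Iset E j. d i j) = 0"
    and correction: "\<And>i. i \<in> {1..I} \<Longrightarrow> lamhat i =
      (\<Sum>j \<in> Jset E i. mu i j * \<xi>s i j * nuhat j + mu i j * d i j + muhat i j * \<xi>s i j * nu j) - vp * p i"
    using swss_optimal_correction[OF tree mu_pos p_pos crp_sum vp_def] by blast
  have E_sub: "E \<subseteq> {1..I} \<times> {1..J}" by (rule bip_tree_subset[OF tree])
  have near: "\<bar>real (Nnij n i j) - \<xi>s i j * real (Nn n j)\<bar> \<le> 1" if "(i, j) \<in> E" for n i j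
    using abs_diff_le_1_between_floor_ceiling[OF Nij_lb[OF that] Nij_ub[OF that]] by simp
  have growth: "(\<lambda>n. \<xi>s i j * real (Nn n j) / real n) \<longlonglongrightarrow> \<xi>s i j * nu j" if "(i, j) \<in> E" for i j
    using tendsto_mult_left[OF lim_N, of j "\<xi>s i j"] that E_sub by auto
  have pos: "0 < \<xi>s i j * nu j" if "(i, j) \<in> E" for i j
    using crp_pos[OF that] nu_pos that E_sub by auto
  obtain C e K Nt where "C > 0" and e_bound: "\<And>n i j. (i, j) \<in> E \<Longrightarrow> \<bar>e n i j\<bar> \<le> (K :: real)"
    and alloc: "\<forall>\<^sub>F n in sequentially.
      (\<forall>j. (\<Sum>i \<in> Iset E j. Nt n i j) = (\<Sum>i \<in> Iset E j. Nnij n i j)) \<and>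
      (\<forall>(i, j) \<in> E. \<bar>real (Nnij n i j) - real (Nt n i j)\<bar> \<le> C * sqrt (real n) \<and>
         real (Nt n i j) = \<xi>s i j * real (Nn n j) + sqrt (real n) * d i j + e n i j)"
    using rounded_allocation[where M = Nnij and a = "\<lambda>n i j. \<xi>s i j * real (Nn n j)"
        and c = "\<lambda>i j. \<xi>s i j * nu j", OF bip_tree_finite[OF tree] d_pool near growth pos] by blast
  define \<epsilon> where "\<epsilon> n i = lamn n i - (\<Sum>j \<in> Jset E i. mun n i j * real (Nt n i j)) + vp * p i * sqrt (real n)"
    for n i
  have "(\<lambda>n. \<epsilon> n i / sqrt (real n)) \<longlonglongrightarrow> 0" if i: "i \<in> {1..I}" for i
  proof -
    have "(\<lambda>n. (lamn n i - (\<Sum>j \<in> Jset E i. mun n i j * real (Nt n i j))) / sqrt (real n))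
        \<longlonglongrightarrow> lamhat i - (\<Sum>j \<in> Jset E i. mu i j * \<xi>s i j * nuhat j + mu i j * d i j + muhat i j * \<xi>s i j * nu j)"
    proof (rule tendsto_class_residual[where e = "\<lambda>n j. e n i j" and K = K])
      show "lam i = (\<Sum>j \<in> Jset E i. mu i j * \<xi>s i j * nu j)"
        using crp i unfolding crp_unique_solution_def crp_feasible_def by (simp add: mult_ac)
    qed (use lim_lamhat[OF i] lim_muhat lim_nuhat e_bound E_sub finite_Jset[OF bip_tree_finite[OF tree]] in
      \<open>auto simp: Jset_def intro: eventually_mono[OF alloc]\<close>)
    then have "(\<lambda>n. (lamn n i - (\<Sum>j \<in> Jset E i. mun n i j * real (Nt n i j))) / sqrt (real n) + vp * p i)
        \<longlonglongrightarrow> 0"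
      using correction[OF i] by (auto intro: tendsto_eq_intros)
    then show ?thesis
      by (rule Lim_transform_eventually)
        (use eventually_ge_at_top[of 1] in \<open>eventually_elim, simp add: \<epsilon>_def field_simps\<close>)
  qed
  moreover have "\<forall>\<^sub>F n in sequentially.
       (\<forall>i \<in> {1..I}. lamn n i =
          (\<Sum>j \<in> Jset E i. mun n i j * real (Nt n i j)) - vp * p i * sqrt (real n) + \<epsilon> n i) \<and>
       (\<forall>(i, j) \<in> E. \<bar>real (Nnij n i j) - real (Nt n i j)\<bar> \<le> C * sqrt (real n)) \<and>
       (\<forall>j \<in> {1..J}. (\<Sum>i \<in> Iset E j. Nt n i j) = Nn n j)"
    using alloc by eventually_elim (auto simp: \<epsilon>_def Nij_sum)
  ultimately show ?thesis using \<open>C > 0\<close> by blast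
qed

end
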